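(* Let $(M,\le)$ be a finite ordered monoid, $G\subseteq M$ a generating set and $eval:G^*\to M$ the natural evaluation morphism. Suppose there are words $u,v,w_1,w_2\in G^*$ such that (i) $u=w_1w_2$; (ii) $v$ is a shuffle of $w_1$ and $w_2$; (iii) $eval(u)$ is idempotent; (iv) $eval(uvu)\not\le eval(u)$. Then $N^1(M)=\Omega(n)$.
   Context: $v$ is a shuffle of $w_1$ and $w_2$ if there exist $k\ge0$ and words $w_{1,1},\dots,w_{1,k},w_{2,1},\dots,w_{2,k}\in G^*$ (possibly empty) with $w_1=w_{1,1}\cdots w_{1,k}$, $w_2=w_{2,1}\cdots w_{2,k}$ and $v=w_{1,1}w_{2,1}w_{1,2}w_{2,2}\cdots w_{1,k}w_{2,k}$. An element $e$ is idempotent if $ee=e$. A finite ordered monoid is a finite monoid with a partial order such that $x\le y\Rightarrow zx\le zy$ and $xz\le yz$. Non-deterministic communication complexity: for $f:X\times Y\to\{0,1\}$, $N^1(f)$ is the minimum cost of a non-deterministic protocol for $f$; equivalently, up to an additive constant 2, $N^1(f)=\log_2 C^1(f)$, where $C^1(f)$ is the minimum number of rectangles $S\times T$ on which $f\equiv1$ whose union is $f^{-1}(1)$. An order ideal is a subset $I\subseteq M$ with $y\in I, x\le y\Rightarrow x\in I$. For an order ideal $I$, $N^1(M,I)(n)$ is $N^1$ of the function where Alice receives $m_1,m_3,\dots,m_{2n-1}\in M$, Bob receives $m_2,\dots,m_{2n}\in M$, with value $1$ iff $m_1\cdots m_{2n}\in I$; $N^1(M)(n)=\max_I N^1(M,I)(n)$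 over all order ideals. Asymptotics are as $n\to\infty$. *)

theory Defs
  imports Main "HOL-Library.Landau_Symbols"
begin

definition ordered_monoid :: "('m::{monoid_mult,order}) itself \<Rightarrow> bool" where
  "ordered_monoid _ \<longleftrightarrow> (\<forall>x y z::'m. x \<le> y \<longrightarrow> z * x \<le> z * y \<and> x * z \<le> y * z)"

definition generates :: "('m::monoid_mult) set \<Rightarrow> bool" where
  "generates G \<longleftrightarrow> (\<forall>m::'m. \<exists>w. set w \<subseteq> G \<and> prod_list w = m)"

definition is_shuffle :: "'a list \<Rightarrow> 'a list \<Rightarrow> 'a list \<Rightarrow> bool" where
  "is_shuffle v w1 w2 \<longleftrightarrow> (\<exists>ps qs. length ps = length qs \<and> w1 = concat ps \<and> w2 = concat qs
       \<and> v = concat (map (\<lambda>(a,b). a @ b) (zip ps qs)))"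

definition order_ideal :: "('m::order) set \<Rightarrow> bool" where
  "order_ideal I \<longleftrightarrow> (\<forall>x y. y \<in> I \<longrightarrow> x \<le> y \<longrightarrow> x \<in> I)"

definition one_rect :: "('x \<Rightarrow> 'y \<Rightarrow> bool) \<Rightarrow> 'x set \<Rightarrow> 'y set \<Rightarrow> 'x set \<Rightarrow> 'y set \<Rightarrow> bool" where
  "one_rect f X Y S T \<longleftrightarrow> S \<subseteq> X \<and> T \<subseteq> Y \<and> (\<forall>x\<in>S. \<forall>y\<in>T. f x y)"

definition cover_number :: "('x \<Rightarrow> 'y \<Rightarrow> bool) \<Rightarrow> 'x set \<Rightarrow> 'y set \<Rightarrow> nat" where
  "cover_number f X Y = (LEAST k. \<exists>R. finite R \<and> card R = k \<and>
      (\<forall>(S,T)\<in>R. one_rect f X Y S T) \<and>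
      (\<Union>(S,T)\<in>R. S \<times> T) = {(x,y). x \<in> X \<and> y \<in> Y \<and> f x y})"

text \<open>Non-deterministic complexity, taken as log2 of the cover number (equal to N^1 up to an
  additive constant 2, which is irrelevant for the asymptotic claim).\<close>
definition N1 :: "('x \<Rightarrow> 'y \<Rightarrow> bool) \<Rightarrow> 'x set \<Rightarrow> 'y set \<Rightarrow> real" where
  "N1 f X Y = log 2 (real (cover_number f X Y))"

text \<open>Alice holds m1,m3,..., Bob holds m2,m4,...; the product is m1 m2 ... m(2n).\<close>
definition interleave_prod :: "('m::monoid_mult) list \<Rightarrow> 'm list \<Rightarrow> 'm" where
  "interleave_prod xs ys = prod_list (concat (map (\<lambda>(a,b). [a,b]) (zip xs ys)))"

definition N1_ideal :: "('m::{monoid_mult,order}) set \<Rightarrow> nat \<Rightarrow> real" where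
  "N1_ideal I n = N1 (\<lambda>xs ys. interleave_prod xs ys \<in> I)
                     {xs. length xs = n} {ys. length ys = n}"

definition N1_monoid :: "('m::{monoid_mult,order,finite}) itself \<Rightarrow> nat \<Rightarrow> real" where
  "N1_monoid _ n = Max ((\<lambda>I::'m set. N1_ideal I n) ` {I. order_ideal I})"

end

theory Submission
  imports Defs
begin

text \<open>
  Let \<open>e = eval(u)\<close> and \<open>V = eval(v)\<close>, and cut \<open>w\<^sub>1 = p\<^sub>1\<cdots>p\<^sub>k\<close>, \<open>w\<^sub>2 = q\<^sub>1\<cdots>q\<^sub>k\<close> along the
  shuffle, so that \<open>V = p\<^sub>1q\<^sub>1\<cdots>p\<^sub>kq\<^sub>k\<close>. Each player encodes a bit by a block of \<open>3k\<close> letters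
  such that two blocks interleave to \<open>V\<close> if both bits are 1 and to \<open>p\<^sub>1\<cdots>p\<^sub>kq\<^sub>1\<cdots>q\<^sub>k = e\<close>
  otherwise. Framing \<open>n\<close> such blocks by two \<open>e\<close>-blocks, the product is \<open>e\<close> for disjoint bit
  vectors and, as \<open>e\<close> is idempotent, \<open>eVe\<close>, which is not below \<open>e\<close>, for vectors meeting in
  exactly one position. So the order ideal \<open>\<down>e\<close> decides unique disjointness on \<open>n \<approx> N/3k\<close> bits.
  A 1-rectangle then contains no pair meeting exactly once, hence at most \<open>2\<^sup>n\<close> of the \<open>3\<^sup>n\<close>
  disjoint pairs (Kaibel and Weltge), so \<open>C\<^sup>1 \<ge> (3/2)\<^sup>n\<close>.
\<close>

definition common_ones :: "bool list \<Rightarrow> bool list \<Rightarrow> nat" where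
  "common_ones a b = count_list (map2 (\<and>) a b) True"

lemma common_ones_Nil [simp]: "common_ones [] b = 0"
  by (simp add: common_ones_def)

lemma common_ones_Cons [simp]:
  "common_ones (x # a) (y # b) = (if x \<and> y then 1 else 0) + common_ones a b"
  by (simp add: common_ones_def)

definition bitvecs :: "nat \<Rightarrow> bool list set" where
  "bitvecs n = {xs. length xs = n}"

definition disjoint_pairs :: "bool list set \<Rightarrow> bool list set \<Rightarrow> (bool list \<times> bool list) set" where
  "disjoint_pairs A B = {(a, b). a \<in> A \<and> b \<in> B \<and> common_ones a b = 0}"

lemma finite_bitvecs: "finite (bitvecs n)"
  unfolding bitvecs_def using finite_lists_length_eq[of "UNIV :: bool set" n] by simp

lemma finite_disjoint_pairs:
  "A \<subseteq> bitvecs n \<Longrightarrow> B \<subseteq> bitvecs n \<Longrightarrow> finite (disjoint_pairs A B)"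
  by (rule finite_subset[of _ "bitvecs n \<times> bitvecs n"]) (auto simp: disjoint_pairs_def finite_bitvecs)

lemma card_disjoint_pairs_Suc:
  assumes "A \<subseteq> bitvecs (Suc n)" "B \<subseteq> bitvecs (Suc n)"
  defines "A0 \<equiv> {a. False # a \<in> A}" and "A1 \<equiv> {a. True # a \<in> A}"
    and "B0 \<equiv> {b. False # b \<in> B}" and "B1 \<equiv> {b. True # b \<in> B}"
  shows "card (disjoint_pairs A B) = card (disjoint_pairs A0 B0)
     + card (disjoint_pairs A1 B0) + card (disjoint_pairs A0 B1)"
proof -
  have sub: "A0 \<subseteq> bitvecs n" "A1 \<subseteq> bitvecs n" "B0 \<subseteq> bitvecs n" "B1 \<subseteq> bitvecs n"
    using assms(1,2) by (auto simp: bitvecs_def A0_def A1_def B0_def B1_def)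
  define cons2 where "cons2 = (\<lambda>x y (a :: bool list, b :: bool list). (x # a, y # b))"
  have split: "disjoint_pairs A B = cons2 False False ` disjoint_pairs A0 B0
      \<union> cons2 True False ` disjoint_pairs A1 B0 \<union> cons2 False True ` disjoint_pairs A0 B1"
  proof (intro set_eqI iffI)
    fix p assume "p \<in> disjoint_pairs A B"
    then obtain a b where p: "p = (a, b)" "a \<in> A" "b \<in> B" "common_ones a b = 0"
      by (auto simp: disjoint_pairs_def)
    moreover obtain x a' y b' where "a = x # a'" "b = y # b'"
      using p assms(1,2) by (cases a; cases b) (auto simp: bitvecs_def)
    ultimately show "p \<in> cons2 False False ` disjoint_pairs A0 B0
      \<union> cons2 True False ` disjoint_pairs A1 B0 \<union> cons2 False True ` disjoint_pairs A0 B1"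
      unfolding cons2_def disjoint_pairs_def A0_def A1_def B0_def B1_def
      by (cases x; cases y) (auto simp: image_iff split: if_splits)
  qed (auto simp: cons2_def disjoint_pairs_def A0_def A1_def B0_def B1_def)
  have inj: "inj (cons2 x y)" for x y
    unfolding cons2_def inj_def by auto
  have fin: "finite (disjoint_pairs A0 B0)" "finite (disjoint_pairs A1 B0)" "finite (disjoint_pairs A0 B1)"
    using sub finite_disjoint_pairs by blast+
  have card_cons2: "card (cons2 x y ` P) = card P" for x y P
    using inj by (meson card_image inj_on_subset subset_UNIV)
  have disj: "cons2 False False ` disjoint_pairs A0 B0 \<inter> cons2 True False ` disjoint_pairs A1 B0 = {}"
    "(cons2 False False ` disjoint_pairs A0 B0 \<union> cons2 True False ` disjoint_pairs A1 B0)
       \<inter> cons2 False True ` disjoint_pairs A0 B1 = {}"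
    by (auto simp: cons2_def)
  show ?thesis
    unfolding split using fin
    by (simp add: card_Un_disjoint[OF _ _ disj(2)] card_Un_disjoint[OF _ _ disj(1)] card_cons2)
qed

lemma card_disjoint_pairs_bitvecs: "card (disjoint_pairs (bitvecs n) (bitvecs n)) = 3 ^ n"
proof (induction n)
  case 0
  have "disjoint_pairs (bitvecs 0) (bitvecs 0) = {([], [])}"
    by (auto simp: disjoint_pairs_def bitvecs_def)
  then show ?case by simp
next
  case (Suc n)
  have "{a. x # a \<in> bitvecs (Suc n)} = bitvecs n" for x
    by (auto simp: bitvecs_def)
  with Suc show ?case
    using card_disjoint_pairs_Suc[of "bitvecs (Suc n)" n "bitvecs (Suc n)"] by simp
qed

text \<open>
  In the induction step, the disjoint pairs starting with \<open>(0,0)\<close> or \<open>(1,0)\<close> lie in the rectangle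
  \<open>(A\<^sub>0 \<union> A\<^sub>1) \<times> B\<^sub>0\<close>, and those counted twice there lie in \<open>A\<^sub>1 \<times> B\<^sub>0\<close>, which cannot meet the
  \<open>(0,1)\<close>-pairs in \<open>A\<^sub>0 \<times> B\<^sub>1\<close>: a common pair would give \<open>(1a,1b)\<close> with exactly one common one.
  So overlap and \<open>(0,1)\<close>-pairs fit together into the rectangle \<open>A\<^sub>0 \<times> (B\<^sub>0 \<union> B\<^sub>1)\<close>.
\<close>
lemma card_disjoint_pairs_le:
  assumes "A \<subseteq> bitvecs n" "B \<subseteq> bitvecs n" "\<forall>a\<in>A. \<forall>b\<in>B. common_ones a b \<noteq> 1"
  shows "card (disjoint_pairs A B) \<le> 2 ^ n"
  using assms
proof (induction n arbitrary: A B)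
  case 0
  then have "disjoint_pairs A B \<subseteq> {([], [])}"
    by (auto simp: disjoint_pairs_def bitvecs_def)
  then have "card (disjoint_pairs A B) \<le> card {([] :: bool list, [] :: bool list)}"
    by (rule card_mono[rotated]) simp
  then show ?case
    by simp
next
  case (Suc n)
  let ?A0 = "{a. False # a \<in> A}" and ?A1 = "{a. True # a \<in> A}"
  let ?B0 = "{b. False # b \<in> B}" and ?B1 = "{b. True # b \<in> B}"
  let ?D = disjoint_pairs
  have sub: "?A0 \<subseteq> bitvecs n" "?A1 \<subseteq> bitvecs n" "?B0 \<subseteq> bitvecs n" "?B1 \<subseteq> bitvecs n"
    and sub_Un: "?A0 \<union> ?A1 \<subseteq> bitvecs n" "?B0 \<union> ?B1 \<subseteq> bitvecs n"
    using Suc.prems(1,2) by (auto simp: bitvecs_def)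
  have no_one: "common_ones a b \<noteq> 1" if "x # a \<in> A" "y # b \<in> B" "\<not> (x \<and> y)" for x y a b
  proof -
    have "common_ones (x # a) (y # b) \<noteq> 1"
      using Suc.prems(3) that(1,2) by blast
    with that(3) show ?thesis
      by (simp split: if_splits)
  qed
  have left: "card (?D (?A0 \<union> ?A1) ?B0) \<le> 2 ^ n"
    using Suc.IH[OF sub_Un(1) sub(3)] no_one by blast
  have right: "card (?D ?A0 (?B0 \<union> ?B1)) \<le> 2 ^ n"
    using Suc.IH[OF sub(1) sub_Un(2)] no_one by blast
  let ?X = "?D ?A0 ?B0 \<inter> ?D ?A1 ?B0"
  have fin: "finite (?D ?A0 ?B0)" "finite (?D ?A1 ?B0)" "finite (?D ?A0 ?B1)"
    "finite (?D (?A0 \<union> ?A1) ?B0)" "finite (?D ?A0 (?B0 \<union> ?B1))"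
    using sub sub_Un by (simp_all add: finite_disjoint_pairs)
  have "card (?D ?A0 ?B0) + card (?D ?A1 ?B0) = card (?D ?A0 ?B0 \<union> ?D ?A1 ?B0) + card ?X"
    using card_Un_Int[OF fin(1,2)] .
  also have "card (?D ?A0 ?B0 \<union> ?D ?A1 ?B0) \<le> card (?D (?A0 \<union> ?A1) ?B0)"
    by (rule card_mono[OF fin(4)]) (auto simp: disjoint_pairs_def)
  finally have overlap: "card (?D ?A0 ?B0) + card (?D ?A1 ?B0) \<le> card (?D (?A0 \<union> ?A1) ?B0) + card ?X"
    by simp
  have "?X \<inter> ?D ?A0 ?B1 = {}"
  proof (rule ccontr)
    assume "?X \<inter> ?D ?A0 ?B1 \<noteq> {}"
    then obtain a b where "True # a \<in> A" "True # b \<in> B" "common_ones a b = 0"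
      by (auto simp: disjoint_pairs_def)
    then show False
      using Suc.prems(3) by force
  qed
  then have "card ?X + card (?D ?A0 ?B1) = card (?X \<union> ?D ?A0 ?B1)"
    using fin(1,3) by (simp add: card_Un_disjoint)
  also have "\<dots> \<le> card (?D ?A0 (?B0 \<union> ?B1))"
    by (rule card_mono[OF fin(5)]) (auto simp: disjoint_pairs_def)
  finally show ?case
    using card_disjoint_pairs_Suc[OF Suc.prems(1,2)] overlap left right by simp
qed

lemma cover_number_lower_bound:
  fixes f :: "'x \<Rightarrow> 'y \<Rightarrow> bool" and h :: "'q \<Rightarrow> 'x \<times> 'y"
  assumes "finite X" "finite Y" "finite Q"
    and ones: "\<And>q. q \<in> Q \<Longrightarrow> fst (h q) \<in> X \<and> snd (h q) \<in> Y \<and> f (fst (h q)) (snd (h q))"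
    and rect: "\<And>S T. one_rect f X Y S T \<Longrightarrow> card {q\<in>Q. h q \<in> S \<times> T} \<le> B"
  shows "card Q \<le> cover_number f X Y * B"
proof -
  let ?ones = "{(x, y). x \<in> X \<and> y \<in> Y \<and> f x y}"
  let ?covers = "\<lambda>k. \<exists>R. finite R \<and> card R = k \<and> (\<forall>(S, T)\<in>R. one_rect f X Y S T)
      \<and> (\<Union>(S, T)\<in>R. S \<times> T) = ?ones"
  define singletons where "singletons = (\<lambda>(x, y). ({x}, {y})) ` ?ones"
  have "finite ?ones"
    by (rule finite_subset[of _ "X \<times> Y"]) (use assms(1,2) in auto)
  then have "finite singletons"
    by (simp add: singletons_def)
  moreover have "\<forall>(S, T)\<in>singletons. one_rect f X Y S T"
    by (auto simp: singletons_def one_rect_def)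
  moreover have "(\<Union>(S, T)\<in>singletons. S \<times> T) = ?ones"
    by (auto simp: singletons_def)
  ultimately have "?covers (card singletons)"
    by blast
  then have "?covers (cover_number f X Y)"
    unfolding cover_number_def by (rule LeastI)
  then obtain R where R: "finite R" "card R = cover_number f X Y"
    "\<forall>(S, T)\<in>R. one_rect f X Y S T" "(\<Union>(S, T)\<in>R. S \<times> T) = ?ones"
    by blast
  define inside where "inside r = {q\<in>Q. h q \<in> fst r \<times> snd r}" for r
  have "Q \<subseteq> (\<Union>r\<in>R. inside r)"
  proof
    fix q assume "q \<in> Q"
    then have "h q \<in> ?ones"
      using ones[OF \<open>q \<in> Q\<close>] by (simp add: split_beta)
    then have "h q \<in> (\<Union>(S, T)\<in>R. S \<times> T)"
      using R(4) by simp
    then obtain r where "r \<in> R" "h q \<in> (case r of (S, T) \<Rightarrow> S \<times> T)"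
      by (rule UN_E)
    with \<open>q \<in> Q\<close> show "q \<in> (\<Union>r\<in>R. inside r)"
      by (auto simp: inside_def split_beta)
  qed
  then have "card Q \<le> card (\<Union>r\<in>R. inside r)"
    by (rule card_mono[rotated]) (use R(1) assms(3) in \<open>simp add: inside_def\<close>)
  also have "\<dots> \<le> (\<Sum>r\<in>R. card (inside r))"
    by (rule card_UN_le[OF R(1)])
  also have "\<dots> \<le> card R * B"
  proof -
    have "card (inside r) \<le> B" if "r \<in> R" for r
    proof -
      have "one_rect f X Y (fst r) (snd r)"
        using R(3) that by (auto simp: split_beta)
      then show ?thesis
        unfolding inside_def by (rule rect)
    qed
    then show ?thesis
      using sum_bounded_above[of R "\<lambda>r. card (inside r)" B] by simp
  qed
  finally show ?thesis
    using R(2) by simp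
qed

lemma unique_disjointness_cover_bound:
  fixes f :: "'x \<Rightarrow> 'y \<Rightarrow> bool"
  assumes "finite X" "finite Y"
    and "\<And>a. a \<in> bitvecs n \<Longrightarrow> ea a \<in> X" "\<And>b. b \<in> bitvecs n \<Longrightarrow> eb b \<in> Y"
    and disjoint: "\<And>a b. a \<in> bitvecs n \<Longrightarrow> b \<in> bitvecs n \<Longrightarrow> common_ones a b = 0 \<Longrightarrow> f (ea a) (eb b)"
    and unique: "\<And>a b. a \<in> bitvecs n \<Longrightarrow> b \<in> bitvecs n \<Longrightarrow> common_ones a b = 1 \<Longrightarrow> \<not> f (ea a) (eb b)"
  shows "3 ^ n \<le> cover_number f X Y * 2 ^ n"
  unfolding card_disjoint_pairs_bitvecs[symmetric]
proof (rule cover_number_lower_bound[where h = "\<lambda>(a, b). (ea a, eb b)"])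
  show "finite (disjoint_pairs (bitvecs n) (bitvecs n))"
    using finite_disjoint_pairs by blast
  fix S T assume "one_rect f X Y S T"
  then have "\<forall>a\<in>{a \<in> bitvecs n. ea a \<in> S}. \<forall>b\<in>{b \<in> bitvecs n. eb b \<in> T}. common_ones a b \<noteq> 1"
    using unique unfolding one_rect_def by blast
  then have "card (disjoint_pairs {a \<in> bitvecs n. ea a \<in> S} {b \<in> bitvecs n. eb b \<in> T}) \<le> 2 ^ n"
    by (intro card_disjoint_pairs_le) auto
  moreover have "{q \<in> disjoint_pairs (bitvecs n) (bitvecs n). (case q of (a, b) \<Rightarrow> (ea a, eb b)) \<in> S \<times> T}
      = disjoint_pairs {a \<in> bitvecs n. ea a \<in> S} {b \<in> bitvecs n. eb b \<in> T}"
    by (auto simp: disjoint_pairs_def)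
  ultimately show "card {q \<in> disjoint_pairs (bitvecs n) (bitvecs n). (case q of (a, b) \<Rightarrow> (ea a, eb b)) \<in> S \<times> T} \<le> 2 ^ n"
    by simp
qed (use assms in \<open>auto simp: disjoint_pairs_def\<close>)

lemma interleave_prod_Nil [simp]: "interleave_prod [] ys = 1"
  by (simp add: interleave_prod_def)

lemma interleave_prod_Cons [simp]:
  "interleave_prod (x # xs) (y # ys) = x * y * interleave_prod xs ys"
  by (simp add: interleave_prod_def mult.assoc)

lemma interleave_prod_append:
  "length xs = length ys \<Longrightarrow>
    interleave_prod (xs @ xs') (ys @ ys') = interleave_prod xs ys * interleave_prod xs' ys'"
proof (induction xs arbitrary: ys)
  case (Cons x xs)
  then show ?case by (cases ys) (auto simp: mult.assoc)
qed simp

lemma interleave_prod_replicate_one_right: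
  "interleave_prod xs (replicate (length xs) 1) = prod_list xs"
  by (induction xs) auto

lemma interleave_prod_replicate_one_left:
  "interleave_prod (replicate (length ys) 1) ys = prod_list ys"
  by (induction ys) auto

lemma interleave_prod_concat_map:
  assumes "\<And>x y. length (f x) = length (g y)" "length xs = length ys"
  shows "interleave_prod (concat (map f xs)) (concat (map g ys))
     = prod_list (map2 (\<lambda>x y. interleave_prod (f x) (g y)) xs ys)"
  using assms(2)
proof (induction xs arbitrary: ys)
  case (Cons x xs)
  then show ?case using assms(1) by (cases ys) (auto simp: interleave_prod_append)
qed simp

lemma prod_list_concat:
  "prod_list (concat xss) = prod_list (map prod_list (xss :: 'a::monoid_mult list list))"
  by (induction xss) simp_all

lemma prod_list_shuffle:
  fixes ps qs :: "'a::monoid_mult list list"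
  assumes "length ps = length qs"
  shows "prod_list (concat (map (\<lambda>(a, b). a @ b) (zip ps qs)))
     = interleave_prod (map prod_list ps) (map prod_list qs)"
  using assms
proof (induction ps arbitrary: qs)
  case (Cons p ps)
  then show ?case by (cases qs) (auto simp: mult.assoc)
qed simp

text \<open>
  Played against each other, the blocks interleave to \<open>\<Prod>Ps \<cdot> \<Prod>Qs\<close> unless both bits are set,
  in which case \<open>Ps\<close> and \<open>Qs\<close> are aligned and interleave to the shuffle product.
\<close>
definition alice_block :: "'a::monoid_mult list \<Rightarrow> bool \<Rightarrow> 'a list" where
  "alice_block Ps x = (if x then replicate (length Ps) 1 @ Ps @ replicate (length Ps) 1
                       else Ps @ replicate (length Ps) 1 @ replicate (length Ps) 1)"

definition bob_block :: "'a::monoid_mult list \<Rightarrow> bool \<Rightarrow> 'a list" where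
  "bob_block Qs y = (if y then replicate (length Qs) 1 @ Qs @ replicate (length Qs) 1
                     else replicate (length Qs) 1 @ replicate (length Qs) 1 @ Qs)"

lemma length_alice_block [simp]: "length (alice_block Ps x) = 3 * length Ps"
  by (simp add: alice_block_def)

lemma length_bob_block [simp]: "length (bob_block Qs y) = 3 * length Qs"
  by (simp add: bob_block_def)

lemma interleave_prod_blocks:
  assumes "length Ps = length Qs"
  shows "interleave_prod (alice_block Ps x) (bob_block Qs y)
     = (if x \<and> y then interleave_prod Ps Qs else prod_list Ps * prod_list Qs)"
proof -
  have "interleave_prod Ps (replicate (length Qs) 1) = prod_list Ps"
    "interleave_prod (replicate (length Ps) 1) Qs = prod_list Qs"
    "interleave_prod (replicate (length Ps) 1) (replicate (length Qs) 1) = (1 :: 'a)"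
    using assms interleave_prod_replicate_one_right[of Ps] interleave_prod_replicate_one_left[of Qs]
      interleave_prod_replicate_one_right[of "replicate (length Qs) (1 :: 'a)"] by simp_all
  with assms show ?thesis
    by (cases x; cases y) (simp_all add: alice_block_def bob_block_def interleave_prod_append)
qed

definition alice_input :: "'a::monoid_mult list \<Rightarrow> nat \<Rightarrow> bool list \<Rightarrow> 'a list" where
  "alice_input Ps p a = alice_block Ps False @ concat (map (alice_block Ps) a)
     @ alice_block Ps False @ replicate p 1"

definition bob_input :: "'a::monoid_mult list \<Rightarrow> nat \<Rightarrow> bool list \<Rightarrow> 'a list" where
  "bob_input Qs p b = bob_block Qs False @ concat (map (bob_block Qs) b)
     @ bob_block Qs False @ replicate p 1"

lemma length_concat_map_const:
  "(\<And>x. length (f x) = k) \<Longrightarrow> length (concat (map f xs)) = k * length xs"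
  by (induction xs) auto

lemma length_alice_input: "length (alice_input Ps p a) = 3 * length Ps * (length a + 2) + p"
  by (simp add: alice_input_def length_concat_map_const algebra_simps)

lemma length_bob_input: "length (bob_input Qs p b) = 3 * length Qs * (length b + 2) + p"
  by (simp add: bob_input_def length_concat_map_const algebra_simps)

lemma interleave_prod_inputs:
  assumes "length Ps = length Qs" "length a = length b"
  defines "e \<equiv> prod_list Ps * prod_list Qs" and "V \<equiv> interleave_prod Ps Qs"
  shows "interleave_prod (alice_input Ps p a) (bob_input Qs p b)
     = e * prod_list (map (\<lambda>t. if t then V else e) (map2 (\<and>) a b)) * e"
proof -
  have blocks: "interleave_prod (alice_block Ps x) (bob_block Qs y) = (if x \<and> y then V else e)" for x y
    using interleave_prod_blocks[OF assms(1)] by (simp add: e_def V_def)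
  have middle: "interleave_prod (concat (map (alice_block Ps) a)) (concat (map (bob_block Qs) b))
      = prod_list (map (\<lambda>t. if t then V else e) (map2 (\<and>) a b))"
    using interleave_prod_concat_map[of "alice_block Ps" "bob_block Qs", OF _ assms(2)] assms(1)
    by (simp add: blocks) (auto intro!: arg_cong[where f = prod_list] split: if_split_asm)
  have lengths: "length (alice_block Ps False) = length (bob_block Qs False)"
    "length (concat (map (alice_block Ps) a)) = length (concat (map (bob_block Qs) b))"
    using assms(1,2) by (simp_all add: length_concat_map_const)
  have padding: "interleave_prod (replicate p 1) (replicate p 1) = (1 :: 'a)"
    using interleave_prod_replicate_one_right[of "replicate p (1 :: 'a)"] by simp
  show ?thesis
    unfolding alice_input_def bob_input_def
    by (simp only: interleave_prod_append lengths blocks middle padding if_False simp_thms)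
       (simp add: mult.assoc)
qed

lemma idempotent_mult_power:
  fixes e :: "'a::monoid_mult"
  assumes "e * e = e"
  shows "e * e ^ n = e" "e ^ n * e = e"
proof -
  show "e * e ^ n = e"
    by (induction n) (simp_all add: mult.assoc[symmetric] assms)
  then show "e ^ n * e = e"
    by (simp add: power_commutes)
qed

lemma idempotent_sandwich_prod_list:
  fixes e V :: "'a::monoid_mult"
  assumes "e * e = e"
  shows idempotent_sandwich_no_occurrence:
      "count_list ts True = 0 \<Longrightarrow> e * prod_list (map (\<lambda>t. if t then V else e) ts) * e = e"
    and idempotent_sandwich_one_occurrence:
      "count_list ts True = 1 \<Longrightarrow> e * prod_list (map (\<lambda>t. if t then V else e) ts) * e = e * V * e"
proof -
  have all_e: "map (\<lambda>t. if t then V else e) xs = replicate (length xs) e" if "True \<notin> set xs" for xs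
    using that by (induction xs) auto
  show "count_list ts True = 0 \<Longrightarrow> e * prod_list (map (\<lambda>t. if t then V else e) ts) * e = e"
    by (simp add: count_list_0_iff all_e idempotent_mult_power[OF assms] assms)
  assume one: "count_list ts True = 1"
  then obtain xs ys where ts: "ts = xs @ True # ys" "True \<notin> set xs"
    using split_list_first[of True ts] count_list_0_iff[of ts True] by auto
  with one have "True \<notin> set ys"
    by (simp add: count_list_0_iff[symmetric])
  with ts show "e * prod_list (map (\<lambda>t. if t then V else e) ts) * e = e * V * e"
    by (simp add: all_e mult.assoc idempotent_mult_power[OF assms])
       (simp add: mult.assoc[symmetric] idempotent_mult_power[OF assms])
qed

lemma N1_monoid_lower_bound:
  fixes Ps Qs :: "'m::{monoid_mult,order,finite} list"
  defines "e \<equiv> prod_list Ps * prod_list Qs"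
  assumes "length Ps = length Qs" "e * e = e" "\<not> e * interleave_prod Ps Qs * e \<le> e"
    and "3 * length Ps * (n + 2) \<le> N"
  shows "real n * log 2 (3 / 2) \<le> N1_monoid TYPE('m) N"
proof -
  let ?I = "{x. x \<le> e}"
  let ?f = "\<lambda>xs ys. interleave_prod xs ys \<in> ?I"
  let ?X = "{xs :: 'm list. length xs = N}"
  define p where "p = N - 3 * length Ps * (n + 2)"
  have product: "interleave_prod (alice_input Ps p a) (bob_input Qs p b)
      = e * prod_list (map (\<lambda>t. if t then interleave_prod Ps Qs else e) (map2 (\<and>) a b)) * e"
    if "a \<in> bitvecs n" "b \<in> bitvecs n" for a b
    using that interleave_prod_inputs[OF assms(2)] unfolding e_def by (simp add: bitvecs_def)
  have finite_X: "finite ?X"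
    using finite_lists_length_eq[of "UNIV :: 'm set" N] by simp
  define cv where "cv = cover_number ?f ?X ?X"
  have "3 ^ n \<le> cv * 2 ^ n"
    unfolding cv_def
  proof (rule unique_disjointness_cover_bound[where ea = "alice_input Ps p" and eb = "bob_input Qs p"])
    show "alice_input Ps p a \<in> ?X" "bob_input Qs p a \<in> ?X" if "a \<in> bitvecs n" for a
      using that assms(2,5) by (simp_all add: bitvecs_def p_def length_alice_input length_bob_input)
    show "?f (alice_input Ps p a) (bob_input Qs p b)"
      if "a \<in> bitvecs n" "b \<in> bitvecs n" "common_ones a b = 0" for a b
      using that
      by (simp add: product idempotent_sandwich_no_occurrence[OF assms(3)] common_ones_def del: map_map)
    show "\<not> ?f (alice_input Ps p a) (bob_input Qs p b)"
      if "a \<in> bitvecs n" "b \<in> bitvecs n" "common_ones a b = 1" for a b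
      using that assms(4)
      by (simp add: product idempotent_sandwich_one_occurrence[OF assms(3)] common_ones_def del: map_map)
  qed (use finite_X in auto)
  then have "(3 :: real) ^ n \<le> real cv * 2 ^ n"
    using of_nat_le_iff[of "3 ^ n" "cv * 2 ^ n"] by simp
  then have "(3 / 2) ^ n \<le> real cv"
    by (simp add: power_divide divide_le_eq)
  then have "log 2 ((3 / 2) ^ n) \<le> log 2 (real cv)"
    by (intro log_mono) simp_all
  then have "real n * log 2 (3 / 2) \<le> N1_ideal ?I N"
    unfolding N1_ideal_def N1_def cv_def by (simp add: log_nat_power)
  also have "\<dots> \<le> N1_monoid TYPE('m) N"
  proof -
    have "order_ideal ?I"
      unfolding order_ideal_def using order_trans by blast
    then show ?thesis
      unfolding N1_monoid_def by (intro Max_ge) auto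
  qed
  finally show ?thesis .
qed

lemma bigomega_of_div_lower_bound:
  fixes f :: "nat \<Rightarrow> real"
  assumes "c > 0" "a > 0" "\<And>N. d * c \<le> N \<Longrightarrow> a * real (N div c - d) \<le> f N"
  shows "f \<in> \<Omega>(\<lambda>n. real n)"
proof (rule landau_omega.bigI)
  show "a / (2 * c) > 0"
    using assms(1,2) by simp
  show "\<forall>\<^sub>F N in at_top. a / (2 * c) * norm (real N) \<le> norm (f N)"
  proof (rule eventually_at_top_linorderI[of "2 * (d + 1) * c"])
    fix N assume N: "2 * (d + 1) * c \<le> N"
    have "d * c \<le> N"
      using N by (simp add: algebra_simps)
    then have d: "d \<le> N div c"
      using assms(1) by (simp add: less_eq_div_iff_mult_less_eq)
    have "N < N div c * c + c"
      using mod_less_divisor[OF assms(1), of N] div_mult_mod_eq[of N c] by linarith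
    then have "real N < real c * (real (N div c) + 1)"
      by (simp add: algebra_simps flip: of_nat_mult of_nat_add of_nat_less_iff)
    then have "real N / (2 * c) \<le> real (N div c - d)"
      using assms(1) N d by (simp add: field_simps of_nat_diff flip: of_nat_mult of_nat_le_iff)
    then have "a / (2 * c) * real N \<le> a * real (N div c - d)"
      using mult_left_mono[of _ _ a] assms(2) by fastforce
    also have "\<dots> \<le> f N"
      using assms(3)[OF \<open>d * c \<le> N\<close>] .
    finally show "a / (2 * c) * norm (real N) \<le> norm (f N)"
      by simp
  qed
qed

theorem mainTheorem9:
  fixes G :: "('m::{monoid_mult,order,finite}) set"
    and u v w1 w2 :: "'m list"
  assumes "ordered_monoid TYPE('m)"
    and "generates G"
    and "set u \<subseteq> G" "set v \<subseteq> G" "set w1 \<subseteq> G" "set w2 \<subseteq> G"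
    and "u = w1 @ w2"
    and "is_shuffle v w1 w2"
    and "prod_list u * prod_list u = prod_list u"
    and "\<not> (prod_list (u @ v @ u) \<le> prod_list u)"
  shows "N1_monoid TYPE('m) \<in> \<Omega>(\<lambda>n. real n)"
proof -
  obtain ps qs where shuffle: "length ps = length qs" "w1 = concat ps" "w2 = concat qs"
    "v = concat (map (\<lambda>(a, b). a @ b) (zip ps qs))"
    using assms(8) unfolding is_shuffle_def by blast
  define Ps where "Ps = map prod_list ps"
  define Qs where "Qs = map prod_list qs"
  have lengths: "length Ps = length Qs"
    using shuffle(1) by (simp add: Ps_def Qs_def)
  have u: "prod_list u = prod_list Ps * prod_list Qs"
    using assms(7) shuffle(2,3) by (simp add: Ps_def Qs_def prod_list_concat)
  have v: "prod_list v = interleave_prod Ps Qs"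
    using shuffle(1,4) prod_list_shuffle by (simp add: Ps_def Qs_def)
  have idempotent: "prod_list Ps * prod_list Qs * (prod_list Ps * prod_list Qs) = prod_list Ps * prod_list Qs"
    using assms(9) u by simp
  have sandwich: "\<not> prod_list Ps * prod_list Qs * interleave_prod Ps Qs * (prod_list Ps * prod_list Qs)
      \<le> prod_list Ps * prod_list Qs"
    using assms(10) u v by (simp add: mult.assoc)
  have "Ps \<noteq> []"
    using sandwich lengths by auto
  show ?thesis
  proof (rule bigomega_of_div_lower_bound[where c = "3 * length Ps" and a = "log 2 (3 / 2)" and d = 2])
    show "0 < 3 * length Ps" "0 < log 2 (3 / 2 :: real)"
      using \<open>Ps \<noteq> []\<close> by simp_all
    fix N assume "2 * (3 * length Ps) \<le> N"
    then have "2 \<le> N div (3 * length Ps)"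
      using \<open>Ps \<noteq> []\<close> by (simp add: less_eq_div_iff_mult_less_eq)
    then have blocks_fit: "3 * length Ps * (N div (3 * length Ps) - 2 + 2) \<le> N"
      using times_div_less_eq_dividend[of "3 * length Ps" N] by (simp only: le_add_diff_inverse2)
    show "log 2 (3 / 2) * real (N div (3 * length Ps) - 2) \<le> N1_monoid TYPE('m) N"
      using N1_monoid_lower_bound[OF lengths idempotent sandwich blocks_fit] by (simp only: mult.commute)
  qed
qed

end
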